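(* For integers $k,m\ge0$, $L_k\le L_m$ in the homomorphism order if and only if $k\ge m$. Moreover, every oriented path of height exactly $3$ is homomorphically equivalent to $L_k$ for some $k\ge0$, and consequently the oriented paths of height at most $3$, up to homomorphic equivalence, form the chain $$\vec P_0<\vec P_1<\vec P_2<\cdots<L_{k+1}<L_k<\cdots<L_1<L_0=\vec P_3,$$ with no oriented path strictly between $\vec P_0$ and $\vec P_1$, nor strictly between $\vec P_1$ and $\vec P_2$.
   Context: A homomorphism between digraphs is a vertex map sending arcs to arcs; $G_1\le G_2$ means one exists, $G_1<G_2$ means $G_1\le G_2$ and $G_2\not\le G_1$. An oriented path is a digraph whose vertices can be listed $p_0,\dots,p_n$ so that its arcs are exactly one arc between $p_{i-1}$ and $p_i$ (in either direction) for each $i$. $\vec P_n$ is the directed path with vertices $0,1,\dots,n$ and arcs $01,12,\dots,(n-1)n$. The height of an oriented path $P$ is the minimum $k\ge0$ with $P\to\vec P_k$. For $k\ge0$, $L_k$ is the oriented path with vertex sequence $(a,b_0,c_0,b_1,c_1,\dots,b_k,c_k,d)$ and arcs $ab_0,\ b_0c_0,\ b_1c_0,\ b_1c_1,\ b_2c_1,\ b_2c_2,\dots,b_kc_{k-1},\ b_kc_k,\ c_kd$ (each $xy$ denotes an arc from $x$ to $y$). *)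

theory Defs
  imports Main
begin

type_synonym 'a digraph = "'a set \<times> ('a \<times> 'a) set"

definition verts :: "'a digraph \<Rightarrow> 'a set" where "verts G = fst G"
definition arcs :: "'a digraph \<Rightarrow> ('a \<times> 'a) set" where "arcs G = snd G"

definition hom_le :: "'a digraph \<Rightarrow> 'b digraph \<Rightarrow> bool" where
  "hom_le G H \<longleftrightarrow> (\<exists>f. (\<forall>x\<in>verts G. f x \<in> verts H) \<and>
                        (\<forall>(x,y)\<in>arcs G. (f x, f y) \<in> arcs H))"

definition hom_lt :: "'a digraph \<Rightarrow> 'b digraph \<Rightarrow> bool" where
  "hom_lt G H \<longleftrightarrow> hom_le G H \<and> \<not> hom_le H G"

definition hom_equiv :: "'a digraph \<Rightarrow> 'b digraph \<Rightarrow> bool" where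
  "hom_equiv G H \<longleftrightarrow> hom_le G H \<and> hom_le H G"

definition oriented_path :: "'a digraph \<Rightarrow> bool" where
  "oriented_path G \<longleftrightarrow> (\<exists>ps. ps \<noteq> [] \<and> distinct ps \<and> set ps = verts G \<and>
     (\<forall>i. Suc i < length ps \<longrightarrow>
        ((ps!i, ps!Suc i) \<in> arcs G) \<noteq> ((ps!Suc i, ps!i) \<in> arcs G)) \<and>
     arcs G \<subseteq> {e. \<exists>i. Suc i < length ps \<and>
        (e = (ps!i, ps!Suc i) \<or> e = (ps!Suc i, ps!i))})"

definition dipath :: "nat \<Rightarrow> nat digraph" where
  "dipath n = ({0..n}, {(i, Suc i) | i. i < n})"

definition height :: "'a digraph \<Rightarrow> nat" where
  "height G = (LEAST k. hom_le G (dipath k))"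

datatype Lvert = La | Lb nat | Lc nat | Ld

definition Lpath :: "nat \<Rightarrow> Lvert digraph" where
  "Lpath k = ({La, Ld} \<union> Lb ` {0..k} \<union> Lc ` {0..k},
              {(La, Lb 0), (Lc k, Ld)} \<union> {(Lb i, Lc i) | i. i \<le> k}
              \<union> {(Lb (Suc i), Lc i) | i. i < k})"

end

theory Submission
  imports Defs
begin

text \<open>Every oriented path is homomorphically equivalent to a zigzag on \<open>{0..n}\<close>, and maps
  to \<open>P\<^sub>N\<close> are levellings of it: levels in \<open>{0..N}\<close> going up by one along each arc.
  \<open>L\<^sub>k\<close> is the zigzag with levels \<open>0,1,2,1,2,\<dots>,1,2,3\<close>.  A map \<open>L\<^sub>k \<rightarrow> L\<^sub>m\<close>, composed
  with the levelling of \<open>L\<^sub>m\<close>, is a levelling of \<open>L\<^sub>k\<close> into \<open>{0..3}\<close>; so it fixes the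
  endpoints and, moving one step at a time, forces \<open>k \<ge> m\<close>.  In a path of height 3, every
  stretch from level 0 to level 3 that meets neither level in between is a copy of some \<open>L\<^sub>k\<close>;
  for the least such \<open>K\<close> the path folds onto \<open>L\<^sub>K\<close> by sending each vertex to its distance
  from the nearest visible level-0 (or level-3) vertex, truncated at \<open>2K+2\<close>.  Heights up to 2
  are the same argument with directed paths in place of \<open>L\<^sub>k\<close>.\<close>

subsection \<open>The homomorphism order\<close>

lemma hom_leI:
  assumes "\<And>x. x \<in> verts G \<Longrightarrow> f x \<in> verts H"
    and "\<And>x y. (x, y) \<in> arcs G \<Longrightarrow> (f x, f y) \<in> arcs H"
  shows "hom_le G H"
  unfolding hom_le_def using assms by blast

lemma hom_le_refl: "hom_le G G"
  by (rule hom_leI[of _ id]) auto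

lemma hom_le_trans:
  assumes "hom_le G H" and "hom_le H K"
  shows "hom_le G K"
proof -
  obtain f g where "\<forall>x\<in>verts G. f x \<in> verts H" "\<forall>(x, y)\<in>arcs G. (f x, f y) \<in> arcs H"
    and "\<forall>x\<in>verts H. g x \<in> verts K" "\<forall>(x, y)\<in>arcs H. (g x, g y) \<in> arcs K"
    using assms unfolding hom_le_def by blast
  then show ?thesis
    by (intro hom_leI[of _ "g \<circ> f"]) auto
qed

lemma hom_equiv_refl: "hom_equiv G G"
  unfolding hom_equiv_def using hom_le_refl by blast

lemma hom_equiv_sym: "hom_equiv G H \<Longrightarrow> hom_equiv H G"
  unfolding hom_equiv_def by blast

lemma hom_equiv_trans: "hom_equiv G H \<Longrightarrow> hom_equiv H K \<Longrightarrow> hom_equiv G K"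
  unfolding hom_equiv_def by (meson hom_le_trans)

lemma hom_le_equiv_cong:
  assumes "hom_equiv G G'" and "hom_equiv H H'"
  shows "hom_le G H \<longleftrightarrow> hom_le G' H'"
  using assms unfolding hom_equiv_def by (meson hom_le_trans)

lemma height_equiv_cong: "hom_equiv G H \<Longrightarrow> height G = height H"
  unfolding height_def using hom_le_equiv_cong[OF _ hom_equiv_refl] by metis

lemma verts_dipath [simp]: "verts (dipath N) = {0..N}"
  by (simp add: dipath_def verts_def)

lemma arcs_dipath_iff [simp]: "(x, y) \<in> arcs (dipath N) \<longleftrightarrow> y = Suc x \<and> x < N"
  by (auto simp: dipath_def arcs_def)

subsection \<open>Zigzags and their levellings\<close>

definition zigzag :: "nat \<Rightarrow> (nat \<Rightarrow> bool) \<Rightarrow> nat digraph" where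
  "zigzag n up = ({0..n}, {(i, Suc i) | i. i < n \<and> up i} \<union> {(Suc i, i) | i. i < n \<and> \<not> up i})"

lemma verts_zigzag [simp]: "verts (zigzag n up) = {0..n}"
  by (simp add: zigzag_def verts_def)

lemma arcs_zigzag:
  "arcs (zigzag n up) = {(i, Suc i) | i. i < n \<and> up i} \<union> {(Suc i, i) | i. i < n \<and> \<not> up i}"
  by (simp add: zigzag_def arcs_def)

lemma hom_le_zigzag_iff:
  "hom_le (zigzag n up) H \<longleftrightarrow> (\<exists>h. (\<forall>i\<le>n. h i \<in> verts H) \<and>
     (\<forall>i<n. (up i \<longrightarrow> (h i, h (Suc i)) \<in> arcs H) \<and> (\<not> up i \<longrightarrow> (h (Suc i), h i) \<in> arcs H)))"
  unfolding hom_le_def arcs_zigzag by (intro ex_cong1) auto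

lemma dipath_eq_zigzag: "dipath N = zigzag N (\<lambda>_. True)"
  by (simp add: dipath_def zigzag_def)

lemma oriented_path_equiv_zigzag:
  assumes "oriented_path G"
  obtains n up where "hom_equiv G (zigzag n up)"
proof -
  obtain ps where ps: "ps \<noteq> []" "distinct ps" "set ps = verts G"
    and one_arc: "\<forall>i. Suc i < length ps \<longrightarrow> ((ps!i, ps!Suc i) \<in> arcs G) \<noteq> ((ps!Suc i, ps!i) \<in> arcs G)"
    and arcs_G: "arcs G \<subseteq> {e. \<exists>i. Suc i < length ps \<and> (e = (ps!i, ps!Suc i) \<or> e = (ps!Suc i, ps!i))}"
    using assms unfolding oriented_path_def by blast
  define n where "n = length ps - 1"
  define up where "up i \<longleftrightarrow> (ps!i, ps!Suc i) \<in> arcs G" for i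
  have len: "length ps = Suc n"
    using ps(1) unfolding n_def by simp
  define index where "index x = (THE i. i < length ps \<and> ps!i = x)" for x
  have index_in: "x \<in> set ps \<Longrightarrow> index x < length ps \<and> ps ! index x = x" for x
    unfolding index_def by (rule theI') (use distinct_Ex1[OF ps(2)] in blast)
  have index_nth: "i < length ps \<Longrightarrow> index (ps ! i) = i" for i
    unfolding index_def by (rule the_equality) (use ps(2) nth_eq_iff_index_eq in auto)
  have "hom_le G (zigzag n up)"
  proof (rule hom_leI[of _ index])
    fix x assume "x \<in> verts G"
    then show "index x \<in> verts (zigzag n up)"
      using index_in ps(3) len by fastforce
  next
    fix x y assume xy: "(x, y) \<in> arcs G"
    then obtain i where i: "Suc i < length ps" "(x, y) = (ps!i, ps!Suc i) \<or> (x, y) = (ps!Suc i, ps!i)"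
      using arcs_G by blast
    have "index (ps!i) = i" "index (ps!Suc i) = Suc i"
      using index_nth i(1) by auto
    with i xy one_arc len show "(index x, index y) \<in> arcs (zigzag n up)"
      unfolding up_def arcs_zigzag by auto
  qed
  moreover have "hom_le (zigzag n up) G"
    unfolding hom_le_zigzag_iff
  proof (intro exI[of _ "nth ps"] conjI allI impI)
    fix i assume "i \<le> n"
    then show "ps ! i \<in> verts G" using ps(3) len by auto
  next
    fix i assume "i < n" "\<not> up i"
    then show "(ps ! Suc i, ps ! i) \<in> arcs G" using one_arc len unfolding up_def by auto
  qed (simp add: up_def)
  ultimately show ?thesis
    using that unfolding hom_equiv_def by blast
qed

definition levelling :: "nat \<Rightarrow> (nat \<Rightarrow> bool) \<Rightarrow> (nat \<Rightarrow> nat) \<Rightarrow> nat \<Rightarrow> bool" where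
  "levelling n up f N \<longleftrightarrow> (\<forall>i\<le>n. f i \<le> N) \<and>
     (\<forall>i<n. if up i then f (Suc i) = Suc (f i) else f i = Suc (f (Suc i)))"

lemma hom_le_dipath_iff_levelling:
  "hom_le (zigzag n up) (dipath N) \<longleftrightarrow> (\<exists>f. levelling n up f N)"
  unfolding hom_le_zigzag_iff
proof (intro ex_cong1 iffI)
  fix h
  assume "levelling n up h N"
  then have "\<forall>i\<le>n. h i \<le> N" "\<forall>i<n. if up i then h (Suc i) = Suc (h i) else h i = Suc (h (Suc i))"
    unfolding levelling_def by auto
  then show "(\<forall>i\<le>n. h i \<in> verts (dipath N)) \<and> (\<forall>i<n. (up i \<longrightarrow> (h i, h (Suc i)) \<in> arcs (dipath N)) \<and>
      (\<not> up i \<longrightarrow> (h (Suc i), h i) \<in> arcs (dipath N)))"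
    by (metis Suc_le_eq Suc_leI arcs_dipath_iff atLeastAtMost_iff le0 less_imp_le_nat verts_dipath)
qed (auto simp: levelling_def)

definition adjacent :: "nat \<Rightarrow> nat \<Rightarrow> bool" where
  "adjacent a b \<longleftrightarrow> b = Suc a \<or> a = Suc b"

lemma adjacent_sym: "adjacent a b \<longleftrightarrow> adjacent b a"
  unfolding adjacent_def by auto

lemma levelling_le: "levelling n up f N \<Longrightarrow> i \<le> n \<Longrightarrow> f i \<le> N"
  unfolding levelling_def by blast

lemma levelling_Suc:
  "levelling n up f N \<Longrightarrow> i < n \<Longrightarrow> if up i then f (Suc i) = Suc (f i) else f i = Suc (f (Suc i))"
  unfolding levelling_def by blast

lemma levelling_adjacent:
  assumes f: "levelling n up f N" and "adjacent a b" "a \<le> n" "b \<le> n"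
  shows "f b = Suc (f a) \<or> f a = Suc (f b)"
proof -
  consider "b = Suc a" | "a = Suc b"
    using assms(2) unfolding adjacent_def by blast
  then show ?thesis
  proof cases
    case 1
    then show ?thesis using levelling_Suc[OF f, of a] assms(4) by (auto split: if_splits)
  next
    case 2
    then show ?thesis using levelling_Suc[OF f, of b] assms(3) by (auto split: if_splits)
  qed
qed

lemma arc_zigzag_adjacent: "(a, b) \<in> arcs (zigzag n up) \<Longrightarrow> adjacent a b \<and> a \<le> n \<and> b \<le> n"
  unfolding arcs_zigzag adjacent_def by auto

lemma levelling_arc_iff:
  assumes f: "levelling n up f N" and "adjacent a b" "a \<le> n" "b \<le> n"
  shows "(a, b) \<in> arcs (zigzag n up) \<longleftrightarrow> f b = Suc (f a)"
proof -
  consider "b = Suc a" | "a = Suc b"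
    using assms(2) unfolding adjacent_def by blast
  then show ?thesis
  proof cases
    case 1
    then show ?thesis using levelling_Suc[OF f, of a] assms(4) by (auto simp: arcs_zigzag split: if_splits)
  next
    case 2
    then show ?thesis using levelling_Suc[OF f, of b] assms(3) by (auto simp: arcs_zigzag split: if_splits)
  qed
qed

lemma levelling_step:
  "levelling n up f N \<Longrightarrow> i < n \<Longrightarrow> f (Suc i) = Suc (f i) \<or> f i = Suc (f (Suc i))"
  using levelling_Suc by metis

lemma levelling_offset:
  assumes f: "levelling n up f N" and g: "levelling n up g M" and "i \<le> n"
  shows "int (f i) - int (g i) = int (f 0) - int (g 0)"
  using assms(3)
proof (induction i)
  case (Suc i)
  then have IH: "int (f i) - int (g i) = int (f 0) - int (g 0)" and "i < n"
    by simp_all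
  then show ?case
    using levelling_Suc[OF f \<open>i < n\<close>] levelling_Suc[OF g \<open>i < n\<close>] by (cases "up i") simp_all
qed simp

lemma levelling_parity:
  assumes f: "levelling n up f N" and "a \<le> n" "b \<le> n"
  shows "even (f a + a) \<longleftrightarrow> even (f b + b)"
proof -
  have "even (f i + i) \<longleftrightarrow> even (f 0)" if "i \<le> n" for i
    using that
  proof (induction i)
    case (Suc i)
    then have "even (f i + i) \<longleftrightarrow> even (f 0)" and "i < n"
      by simp_all
    then show ?case using levelling_step[OF f \<open>i < n\<close>] by auto
  qed simp
  with assms(2,3) show ?thesis by blast
qed

fun walk :: "(nat \<Rightarrow> bool) \<Rightarrow> nat \<Rightarrow> nat \<Rightarrow> nat" where
  "walk up n 0 = n"
| "walk up n (Suc i) = (if up i then Suc (walk up n i) else walk up n i - 1)"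

lemma walk_bounds: "i \<le> n \<Longrightarrow> n - i \<le> walk up n i \<and> walk up n i \<le> n + i"
  by (induction i) auto

text \<open>Starting the walk at level \<open>n\<close> avoids any truncated subtraction.\<close>

lemma levelling_walk: "levelling n up (walk up n) (2 * n)"
  unfolding levelling_def
proof (intro conjI allI impI)
  fix i assume "i < n"
  then have "n - i \<le> walk up n i" using walk_bounds[of i n up] by simp
  with \<open>i < n\<close> show "if up i then walk up n (Suc i) = Suc (walk up n i) else walk up n i = Suc (walk up n (Suc i))"
    by auto
next
  fix i assume "i \<le> n"
  then show "walk up n i \<le> 2 * n" using walk_bounds[of i n up] by simp
qed

lemma hom_le_height:
  assumes "hom_le G (dipath N)"
  shows "hom_le G (dipath (height G))"
  unfolding height_def using assms by (rule LeastI)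

lemma not_hom_le_below_height: "j < height G \<Longrightarrow> \<not> hom_le G (dipath j)"
  unfolding height_def by (rule not_less_Least)

lemma hom_le_zigzag_height: "hom_le (zigzag n up) (dipath (height (zigzag n up)))"
proof (rule hom_le_height)
  show "hom_le (zigzag n up) (dipath (2 * n))"
    using levelling_walk hom_le_dipath_iff_levelling by blast
qed

lemma levelling_attains_bounds:
  assumes f: "levelling n up f N" and not_le: "\<not> hom_le (zigzag n up) (dipath (N - 1))"
  shows "\<exists>u\<le>n. f u = 0" "\<exists>u\<le>n. f u = N"
proof -
  show "\<exists>u\<le>n. f u = 0"
  proof (rule ccontr)
    assume "\<not> (\<exists>u\<le>n. f u = 0)"
    then have "levelling n up (\<lambda>i. f i - 1) (N - 1)"
      using f unfolding levelling_def by (auto split: if_splits)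
    with not_le show False using hom_le_dipath_iff_levelling by blast
  qed
  show "\<exists>u\<le>n. f u = N"
  proof (rule ccontr)
    assume "\<not> (\<exists>u\<le>n. f u = N)"
    then have "\<forall>i\<le>n. f i \<le> N - 1"
      using levelling_le[OF f] by fastforce
    then have "levelling n up f (N - 1)"
      using f unfolding levelling_def by blast
    with not_le show False using hom_le_dipath_iff_levelling by blast
  qed
qed

lemma dipath_le_dipath_iff: "hom_le (dipath a) (dipath b) \<longleftrightarrow> a \<le> b"
proof
  have id: "levelling a (\<lambda>_. True) id a"
    unfolding levelling_def by auto
  assume "hom_le (dipath a) (dipath b)"
  then obtain f where f: "levelling a (\<lambda>_. True) f b"
    unfolding dipath_eq_zigzag[of a] hom_le_dipath_iff_levelling by blast
  show "a \<le> b"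
    using levelling_offset[OF f id, of a] levelling_le[OF f, of a] by simp
next
  assume "a \<le> b"
  then have "levelling a (\<lambda>_. True) id b"
    unfolding levelling_def by auto
  then show "hom_le (dipath a) (dipath b)"
    unfolding dipath_eq_zigzag[of a] hom_le_dipath_iff_levelling by blast
qed

lemma zigzag_0: "zigzag 0 up = dipath 0"
  by (simp add: zigzag_def dipath_def)

lemma dipath_1_le_zigzag:
  assumes "0 < n"
  shows "hom_le (dipath 1) (zigzag n up)"
  unfolding dipath_eq_zigzag hom_le_zigzag_iff
  by (rule exI[of _ "\<lambda>i. if up 0 then i else 1 - i"]) (use assms in \<open>auto simp: arcs_zigzag\<close>)

subsection \<open>The paths \<open>L\<^sub>k\<close> as zigzags\<close>

text \<open>\<open>L\<^sub>k\<close> as a zigzag on \<open>{0..2k+3}\<close>: position \<open>0\<close> is \<open>a\<close>, \<open>2i+1\<close> is \<open>b\<^sub>i\<close>,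
  \<open>2i+2\<close> is \<open>c\<^sub>i\<close> and \<open>2k+3\<close> is \<open>d\<close>; its levels are \<open>0,1,2,1,2,\<dots>,1,2,3\<close>.\<close>

definition Lup :: "nat \<Rightarrow> nat \<Rightarrow> bool" where
  "Lup k i \<longleftrightarrow> i = 0 \<or> odd i \<or> i = 2*k+2"

definition Lzigzag :: "nat \<Rightarrow> nat digraph" where
  "Lzigzag k = zigzag (2*k+3) (Lup k)"

definition Llevel :: "nat \<Rightarrow> nat \<Rightarrow> nat" where
  "Llevel k p = (if p = 0 then 0 else if 2*k+3 \<le> p then 3 else if odd p then 1 else 2)"

lemma verts_Lzigzag [simp]: "verts (Lzigzag k) = {0..2*k+3}"
  by (simp add: Lzigzag_def)

lemma Llevel_le_3: "Llevel k p \<le> 3"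
  by (simp add: Llevel_def)

lemma Llevel_eq_0_iff: "Llevel k p = 0 \<longleftrightarrow> p = 0"
  by (simp add: Llevel_def)

lemma Llevel_eq_3_iff: "Llevel k p = 3 \<longleftrightarrow> 2*k+3 \<le> p"
  by (simp add: Llevel_def)

lemma levelling_Llevel: "levelling (2*k+3) (Lup k) (Llevel k) 3"
proof -
  have "if Lup k i then Llevel k (Suc i) = Suc (Llevel k i) else Llevel k i = Suc (Llevel k (Suc i))"
    if i: "i < 2*k+3" for i
  proof -
    consider "i = 0" | "odd i" "i < 2*k+2" | "even i" "0 < i" "i < 2*k+2" | "i = 2*k+2"
      using i by fastforce
    then show ?thesis
      by cases (auto simp: Llevel_def Lup_def odd_pos)
  qed
  then show ?thesis
    unfolding levelling_def using Llevel_le_3 by blast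
qed

lemma Lzigzag_arc_iff:
  assumes "adjacent p q" "p \<le> 2*k+3" "q \<le> 2*k+3"
  shows "(p, q) \<in> arcs (Lzigzag k) \<longleftrightarrow> Llevel k q = Suc (Llevel k p)"
  unfolding Lzigzag_def using levelling_arc_iff[OF levelling_Llevel assms] .

lemma arc_Lzigzag:
  assumes "(p, q) \<in> arcs (Lzigzag k)"
  shows "adjacent p q \<and> p \<le> 2*k+3 \<and> q \<le> 2*k+3 \<and> Llevel k q = Suc (Llevel k p)"
  using assms arc_zigzag_adjacent[of p q] Lzigzag_arc_iff[of p q k] unfolding Lzigzag_def by blast

lemma levelling_Lzigzag_span:
  assumes "levelling (2*k+3) (Lup k) f N"
  shows "f (2*k+3) = f 0 + 3"
  using levelling_offset[OF assms levelling_Llevel, of "2*k+3"] by (simp add: Llevel_def)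

lemma Lzigzag_le_dipath_iff: "hom_le (Lzigzag k) (dipath N) \<longleftrightarrow> 3 \<le> N"
proof
  assume "hom_le (Lzigzag k) (dipath N)"
  then obtain f where f: "levelling (2*k+3) (Lup k) f N"
    unfolding Lzigzag_def hom_le_dipath_iff_levelling by blast
  show "3 \<le> N"
    using levelling_Lzigzag_span[OF f] levelling_le[OF f, of "2*k+3"] by simp
next
  assume "3 \<le> N"
  then have "levelling (2*k+3) (Lup k) (Llevel k) N"
    using levelling_Llevel[of k] unfolding levelling_def by (auto intro: le_trans[OF Llevel_le_3])
  then show "hom_le (Lzigzag k) (dipath N)"
    unfolding Lzigzag_def hom_le_dipath_iff_levelling by blast
qed

lemma height_Lzigzag: "height (Lzigzag k) = 3"
  unfolding height_def Lzigzag_le_dipath_iff by (rule Least_equality) auto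

lemma Lzigzag_0: "Lzigzag 0 = dipath 3"
  unfolding Lzigzag_def dipath_eq_zigzag zigzag_def Lup_def
  by (auto simp: less_Suc_eq numeral_3_eq_3)

lemma dipath_2_le_Lzigzag: "hom_le (dipath 2) (Lzigzag k)"
  unfolding dipath_eq_zigzag hom_le_zigzag_iff
proof (intro exI[of _ id] conjI allI impI)
  fix i :: nat assume "i < 2"
  then show "(id i, id (Suc i)) \<in> arcs (Lzigzag k)"
    by (subst Lzigzag_arc_iff) (auto simp: adjacent_def Llevel_def)
qed auto

lemma Lzigzag_le_imp:
  assumes "hom_le (Lzigzag k) (Lzigzag m)"
  shows "m \<le> k"
proof -
  obtain h where h_arc:
    "\<forall>i<2*k+3. (Lup k i \<longrightarrow> (h i, h (Suc i)) \<in> arcs (Lzigzag m)) \<and>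
                (\<not> Lup k i \<longrightarrow> (h (Suc i), h i) \<in> arcs (Lzigzag m))"
    using assms unfolding Lzigzag_def[of k] hom_le_zigzag_iff by blast
  have step: "adjacent (h i) (h (Suc i)) \<and>
      (if Lup k i then Llevel m (h (Suc i)) = Suc (Llevel m (h i))
       else Llevel m (h i) = Suc (Llevel m (h (Suc i))))" if "i < 2*k+3" for i
  proof (cases "Lup k i")
    case True
    then have "(h i, h (Suc i)) \<in> arcs (Lzigzag m)" using h_arc that by blast
    from arc_Lzigzag[OF this] show ?thesis using True by simp
  next
    case False
    then have "(h (Suc i), h i) \<in> arcs (Lzigzag m)" using h_arc that by blast
    from arc_Lzigzag[OF this] show ?thesis using False adjacent_sym by simp
  qed
  have "levelling (2*k+3) (Lup k) (Llevel m \<circ> h) 3"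
    unfolding levelling_def using step Llevel_le_3 by simp
  from levelling_Lzigzag_span[OF this] have "Llevel m (h (2*k+3)) = Llevel m (h 0) + 3"
    by simp
  then have "Llevel m (h 0) = 0" "Llevel m (h (2*k+3)) = 3"
    using Llevel_le_3[of m "h (2*k+3)"] by simp_all
  then have "h 0 = 0" "2*m+3 \<le> h (2*k+3)"
    using Llevel_eq_0_iff Llevel_eq_3_iff by blast+
  moreover have "h i \<le> i" if "i \<le> 2*k+3" for i
    using that
  proof (induction i)
    case (Suc i)
    then show ?case using step[of i] unfolding adjacent_def by auto
  qed (simp add: \<open>h 0 = 0\<close>)
  ultimately show "m \<le> k"
    using le_trans[of "2*m+3" "h (2*k+3)" "2*k+3"] by simp
qed

text \<open>For \<open>m \<le> k\<close>, \<open>L\<^sub>k\<close> folds onto \<open>L\<^sub>m\<close> by zigzagging on its last two inner vertices.\<close>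

lemma Lzigzag_le_if:
  assumes "m \<le> k"
  shows "hom_le (Lzigzag k) (Lzigzag m)"
proof -
  define h where "h p = (if 2*k+3 \<le> p then 2*m+3 else if p \<le> 2*m+2 then p
    else if even p then 2*m+2 else 2*m+1)" for p
  have h_level: "p \<le> 2*k+3 \<Longrightarrow> Llevel m (h p) = Llevel k p" for p
    using assms unfolding h_def Llevel_def by (auto split: if_splits)
  have h_le: "h p \<le> 2*m+3" for p
    unfolding h_def by auto
  have h_adj: "adjacent (h i) (h (Suc i))" if i: "i < 2*k+3" for i
  proof -
    consider "Suc i \<le> 2*m+2" | "2*m+2 \<le> i" "Suc i < 2*k+3" | "i = 2*k+2"
      using i by arith
    then show ?thesis
      using assms unfolding h_def adjacent_def by cases auto
  qed
  have L_arc: "i < 2*k+3 \<Longrightarrow> if Lup k i then Llevel k (Suc i) = Suc (Llevel k i)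
      else Llevel k i = Suc (Llevel k (Suc i))" for i
    using levelling_Suc[OF levelling_Llevel] .
  show ?thesis
    unfolding Lzigzag_def[of k] hom_le_zigzag_iff
  proof (intro exI[of _ h] conjI allI impI)
    fix i assume i: "i < 2*k+3" "Lup k i"
    then show "(h i, h (Suc i)) \<in> arcs (Lzigzag m)"
      using Lzigzag_arc_iff[OF h_adj h_le h_le] L_arc h_level by simp
  next
    fix i assume i: "i < 2*k+3" "\<not> Lup k i"
    then show "(h (Suc i), h i) \<in> arcs (Lzigzag m)"
      using Lzigzag_arc_iff[OF h_adj[THEN adjacent_sym[THEN iffD1]] h_le h_le] L_arc h_level by simp
  qed (simp add: h_le)
qed

lemma Lzigzag_le_iff: "hom_le (Lzigzag k) (Lzigzag m) \<longleftrightarrow> m \<le> k"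
  using Lzigzag_le_imp Lzigzag_le_if by blast

definition Lpos :: "nat \<Rightarrow> Lvert \<Rightarrow> nat" where
  "Lpos k v = (case v of La \<Rightarrow> 0 | Lb i \<Rightarrow> 2*i+1 | Lc i \<Rightarrow> 2*i+2 | Ld \<Rightarrow> 2*k+3)"

definition Lvertex :: "nat \<Rightarrow> nat \<Rightarrow> Lvert" where
  "Lvertex k p = (if p = 0 then La else if 2*k+3 \<le> p then Ld
     else if odd p then Lb (p div 2) else Lc (p div 2 - 1))"

lemma verts_Lpath: "verts (Lpath k) = {La, Ld} \<union> Lb ` {0..k} \<union> Lc ` {0..k}"
  by (simp add: Lpath_def verts_def)

lemma arcs_Lpath: "arcs (Lpath k) = {(La, Lb 0), (Lc k, Ld)} \<union> {(Lb i, Lc i) | i. i \<le> k}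
    \<union> {(Lb (Suc i), Lc i) | i. i < k}"
  by (simp add: Lpath_def arcs_def)

lemma Lpos_in_Lzigzag: "v \<in> verts (Lpath k) \<Longrightarrow> Lpos k v \<le> 2*k+3 \<and> Lvertex k (Lpos k v) = v"
  unfolding verts_Lpath Lpos_def Lvertex_def by auto

lemma Lvertex_in_Lpath:
  assumes "p \<le> 2*k+3"
  shows "Lvertex k p \<in> verts (Lpath k) \<and> Lpos k (Lvertex k p) = p"
proof (cases "p = 0 \<or> p = 2*k+3")
  case True
  then show ?thesis unfolding verts_Lpath Lpos_def Lvertex_def by auto
next
  case False
  then have p: "0 < p" "p < 2*k+3" using assms by auto
  show ?thesis
  proof (cases "odd p")
    case True
    then obtain i where "p = 2*i+1" by (rule oddE)
    with p show ?thesis unfolding verts_Lpath Lpos_def Lvertex_def by auto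
  next
    case False
    then obtain q where "p = 2*q" by blast
    with p have "p = 2*(q-1)+2" by simp
    with p show ?thesis unfolding verts_Lpath Lpos_def Lvertex_def by auto
  qed
qed

lemma Lpath_arc_imp: "(v, w) \<in> arcs (Lpath k) \<Longrightarrow> (Lpos k v, Lpos k w) \<in> arcs (Lzigzag k)"
  unfolding arcs_Lpath by (subst Lzigzag_arc_iff) (auto simp: Lpos_def adjacent_def Llevel_def)

lemma Lzigzag_arc_imp:
  assumes "(p, q) \<in> arcs (Lzigzag k)"
  shows "(Lvertex k p, Lvertex k q) \<in> arcs (Lpath k)"
proof -
  obtain i where i: "i < 2*k+3" "(p = i \<and> q = Suc i \<and> Lup k i) \<or> (p = Suc i \<and> q = i \<and> \<not> Lup k i)"
    using assms unfolding Lzigzag_def arcs_zigzag by auto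
  from i(2) show ?thesis
  proof (elim disjE conjE)
    assume pq: "p = i" "q = Suc i" "Lup k i"
    then consider "i = 0" | "i = 2*k+2" | j where "i = 2*j+1"
      unfolding Lup_def by (blast elim: oddE)
    then show ?thesis
    proof cases
      case (3 j)
      then have "j \<le> k" using i(1) by simp
      with 3 pq(1,2) show ?thesis by (auto simp: Lvertex_def arcs_Lpath)
    qed (use pq(1,2) in \<open>auto simp: Lvertex_def arcs_Lpath\<close>)
  next
    assume pq: "p = Suc i" "q = i" "\<not> Lup k i"
    then obtain j where "i = 2*j" "0 < j" "j \<le> k"
      using i(1) unfolding Lup_def by (auto elim!: evenE)
    then have "i = 2*(j-1)+2" "j - 1 < k" by auto
    then show ?thesis
      using pq(1,2) by (auto simp: Lvertex_def arcs_Lpath)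
  qed
qed

lemma Lpath_equiv_Lzigzag: "hom_equiv (Lpath k) (Lzigzag k)"
  unfolding hom_equiv_def
proof
  show "hom_le (Lpath k) (Lzigzag k)"
    by (rule hom_leI[of _ "Lpos k"]) (use Lpos_in_Lzigzag Lpath_arc_imp in auto)
  show "hom_le (Lzigzag k) (Lpath k)"
    by (rule hom_leI[of _ "Lvertex k"]) (use Lvertex_in_Lpath Lzigzag_arc_imp in auto)
qed

lemma oriented_path_zigzag: "oriented_path (zigzag n up)"
  unfolding oriented_path_def
proof (intro exI[of _ "[0..<Suc n]"] conjI allI impI)
  fix i assume "Suc i < length [0..<Suc n]"
  then show "(([0..<Suc n] ! i, [0..<Suc n] ! Suc i) \<in> arcs (zigzag n up)) \<noteq>
             (([0..<Suc n] ! Suc i, [0..<Suc n] ! i) \<in> arcs (zigzag n up))"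
    by (simp add: arcs_zigzag nth_append del: upt_Suc)
next
  show "arcs (zigzag n up) \<subseteq> {e. \<exists>i. Suc i < length [0..<Suc n] \<and>
      (e = ([0..<Suc n] ! i, [0..<Suc n] ! Suc i) \<or> e = ([0..<Suc n] ! Suc i, [0..<Suc n] ! i))}"
  proof
    fix e assume "e \<in> arcs (zigzag n up)"
    then obtain i where "i < n" "e = (i, Suc i) \<or> e = (Suc i, i)"
      unfolding arcs_zigzag by blast
    then show "e \<in> {e. \<exists>i. Suc i < length [0..<Suc n] \<and>
      (e = ([0..<Suc n] ! i, [0..<Suc n] ! Suc i) \<or> e = ([0..<Suc n] ! Suc i, [0..<Suc n] ! i))}"
      by (intro CollectI exI[of _ i]) (simp del: upt_Suc)
  qed
qed auto

lemma oriented_path_iso: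
  assumes G: "oriented_path G" and f: "inj_on f (verts G)"
    and arcs_G: "arcs G \<subseteq> verts G \<times> verts G"
    and arcs_H: "arcs H = (\<lambda>(x, y). (f x, f y)) ` arcs G" and verts_H: "verts H = f ` verts G"
  shows "oriented_path H"
proof -
  obtain ps where ps: "ps \<noteq> []" "distinct ps" "set ps = verts G"
    and one_arc: "\<forall>i. Suc i < length ps \<longrightarrow> ((ps!i, ps!Suc i) \<in> arcs G) \<noteq> ((ps!Suc i, ps!i) \<in> arcs G)"
    and arcs_ps: "arcs G \<subseteq> {e. \<exists>i. Suc i < length ps \<and> (e = (ps!i, ps!Suc i) \<or> e = (ps!Suc i, ps!i))}"
    using G unfolding oriented_path_def by blast
  have arc_iff: "(f x, f y) \<in> arcs H \<longleftrightarrow> (x, y) \<in> arcs G" if xy: "x \<in> verts G" "y \<in> verts G" for x y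
  proof
    assume "(f x, f y) \<in> arcs H"
    then obtain a b where ab: "(a, b) \<in> arcs G" "f x = f a" "f y = f b"
      unfolding arcs_H by auto
    with arcs_G have "a \<in> verts G" "b \<in> verts G" by auto
    with ab xy f show "(x, y) \<in> arcs G"
      unfolding inj_on_def by metis
  qed (auto simp: arcs_H)
  show ?thesis
    unfolding oriented_path_def
  proof (intro exI[of _ "map f ps"] conjI allI impI)
    show "distinct (map f ps)" using ps f by (simp add: distinct_map)
    show "set (map f ps) = verts H" using ps verts_H by simp
    fix i assume i: "Suc i < length (map f ps)"
    then have "ps ! i \<in> verts G" "ps ! Suc i \<in> verts G"
      unfolding ps(3)[symmetric] by simp_all
    with i show "((map f ps ! i, map f ps ! Suc i) \<in> arcs H) \<noteq> ((map f ps ! Suc i, map f ps ! i) \<in> arcs H)"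
      using one_arc arc_iff by simp
  next
    show "arcs H \<subseteq> {e. \<exists>i. Suc i < length (map f ps) \<and>
        (e = (map f ps ! i, map f ps ! Suc i) \<or> e = (map f ps ! Suc i, map f ps ! i))}"
    proof
      fix e assume "e \<in> arcs H"
      then obtain x y where e: "e = (f x, f y)" "(x, y) \<in> arcs G"
        unfolding arcs_H by auto
      then obtain i where "Suc i < length ps" "(x, y) = (ps!i, ps!Suc i) \<or> (x, y) = (ps!Suc i, ps!i)"
        using arcs_ps by blast
      with e(1) show "e \<in> {e. \<exists>i. Suc i < length (map f ps) \<and>
          (e = (map f ps ! i, map f ps ! Suc i) \<or> e = (map f ps ! Suc i, map f ps ! i))}"
        by (intro CollectI exI[of _ i]) auto
    qed
  qed (use ps in simp)
qed

lemma oriented_path_Lpath: "oriented_path (Lpath k)"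
proof (rule oriented_path_iso[where G = "Lzigzag k" and f = "Lvertex k"])
  show "oriented_path (Lzigzag k)"
    unfolding Lzigzag_def by (rule oriented_path_zigzag)
  show "inj_on (Lvertex k) (verts (Lzigzag k))"
    using Lvertex_in_Lpath by (intro inj_on_inverseI[of _ "Lpos k"]) auto
  show "arcs (Lzigzag k) \<subseteq> verts (Lzigzag k) \<times> verts (Lzigzag k)"
    using arc_Lzigzag by auto
  show "verts (Lpath k) = Lvertex k ` verts (Lzigzag k)"
  proof
    show "verts (Lpath k) \<subseteq> Lvertex k ` verts (Lzigzag k)"
    proof
      fix v assume "v \<in> verts (Lpath k)"
      then show "v \<in> Lvertex k ` verts (Lzigzag k)"
        using Lpos_in_Lzigzag[of v k] by (auto intro!: image_eqI[of _ _ "Lpos k v"])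
    qed
  qed (use Lvertex_in_Lpath in auto)
  show "arcs (Lpath k) = (\<lambda>(x, y). (Lvertex k x, Lvertex k y)) ` arcs (Lzigzag k)"
  proof
    show "arcs (Lpath k) \<subseteq> (\<lambda>(x, y). (Lvertex k x, Lvertex k y)) ` arcs (Lzigzag k)"
    proof
      fix e assume e: "e \<in> arcs (Lpath k)"
      then obtain v w where vw: "e = (v, w)" "v \<in> verts (Lpath k)" "w \<in> verts (Lpath k)"
        unfolding arcs_Lpath verts_Lpath by auto
      then show "e \<in> (\<lambda>(x, y). (Lvertex k x, Lvertex k y)) ` arcs (Lzigzag k)"
        using Lpath_arc_imp[of v w k] e Lpos_in_Lzigzag
        by (auto intro!: image_eqI[of _ _ "(Lpos k v, Lpos k w)"])
    qed
  qed (use Lzigzag_arc_imp in auto)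
qed

subsection \<open>Segments between two levels\<close>

definition between :: "nat \<Rightarrow> nat \<Rightarrow> nat \<Rightarrow> bool" where
  "between s t u \<longleftrightarrow> min s t < u \<and> u < max s t"

definition gap :: "nat \<Rightarrow> nat \<Rightarrow> nat" where
  "gap a b = (a - b) + (b - a)"

lemma gap_sym: "gap a b = gap b a"
  unfolding gap_def by simp

lemma between_le: "between s t u \<Longrightarrow> s \<le> n \<Longrightarrow> t \<le> n \<Longrightarrow> u \<le> n"
  unfolding between_def by auto

lemma between_gap_less: "between s t u \<Longrightarrow> gap s u < gap s t \<and> gap u t < gap s t"
  unfolding between_def gap_def by auto

lemma between_trans: "between s t u \<Longrightarrow> between s u v \<Longrightarrow> between s t v"
  unfolding between_def by auto

lemma even_gap_iff: "even (gap a b) \<longleftrightarrow> even (a + b)"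
proof (cases "a \<le> b")
  case True
  then obtain d where "b = a + d" using le_Suc_ex by blast
  then show ?thesis unfolding gap_def by auto
next
  case False
  then obtain d where "a = b + d" using le_Suc_ex[of b a] by auto
  then show ?thesis unfolding gap_def by auto
qed

lemma adjacent_gap: "adjacent x y \<Longrightarrow> gap x y = 1"
  unfolding adjacent_def gap_def by auto

lemma adjacent_not_between: "adjacent x y \<Longrightarrow> \<not> between x y u"
  unfolding adjacent_def between_def by auto

lemma adjacent_gap_le: "adjacent x y \<Longrightarrow> gap y s \<le> Suc (gap x s)"
  unfolding adjacent_def gap_def by auto

lemma adjacent_if_parity: "a \<le> Suc b \<Longrightarrow> b \<le> Suc a \<Longrightarrow> even a \<noteq> even b \<Longrightarrow> adjacent a b"
  unfolding adjacent_def by (cases "a = b") auto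

lemma adjacent_diff: "adjacent a b \<Longrightarrow> a \<le> M \<Longrightarrow> b \<le> M \<Longrightarrow> adjacent (M - a) (M - b)"
  unfolding adjacent_def by auto

lemma exists_closest_pair:
  assumes "s0 \<le> n" "t0 \<le> n" "f s0 = a" "f t0 = b"
  obtains s t where "s \<le> n" "t \<le> n" "f s = a" "f t = b"
    "\<And>u. between s t u \<Longrightarrow> f u \<noteq> a \<and> f u \<noteq> b"
proof -
  define P where "P st \<longleftrightarrow> fst st \<le> n \<and> snd st \<le> n \<and> f (fst st) = a \<and> f (snd st) = b" for st
  obtain s t where st: "P (s, t)" and closest: "\<And>st. P st \<Longrightarrow> gap s t \<le> gap (fst st) (snd st)"
    using ex_has_least_nat[of P "(s0, t0)" "\<lambda>st. gap (fst st) (snd st)"] assms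
    unfolding P_def by fastforce
  have clean: "f u \<noteq> a \<and> f u \<noteq> b" if u: "between s t u" for u
  proof -
    have "u \<le> n" using between_le[OF u] st unfolding P_def by simp
    then have "f u = a \<Longrightarrow> P (u, t)" "f u = b \<Longrightarrow> P (s, u)"
      using st unfolding P_def by auto
    moreover have "\<not> gap s t \<le> gap u t" "\<not> gap s t \<le> gap s u"
      using between_gap_less[OF u] by simp_all
    ultimately show ?thesis
      using closest[of "(u, t)"] closest[of "(s, u)"] by auto
  qed
  have "s \<le> n" "t \<le> n" "f s = a" "f t = b"
    using st unfolding P_def by simp_all
  from this clean show ?thesis by (rule that)
qed

definition segment :: "nat \<Rightarrow> nat \<Rightarrow> nat \<Rightarrow> nat" where
  "segment s t p = (if s \<le> t then s + p else s - p)"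

lemma segment_0 [simp]: "segment s t 0 = s"
  by (simp add: segment_def)

lemma segment_gap [simp]: "segment s t (gap s t) = t"
  by (simp add: segment_def gap_def)

lemma segment_le: "s \<le> n \<Longrightarrow> t \<le> n \<Longrightarrow> p \<le> gap s t \<Longrightarrow> segment s t p \<le> n"
  by (auto simp: segment_def gap_def)

lemma segment_adjacent: "p < gap s t \<Longrightarrow> adjacent (segment s t p) (segment s t (Suc p))"
  by (auto simp: segment_def gap_def adjacent_def)

lemma segment_between: "0 < p \<Longrightarrow> p < gap s t \<Longrightarrow> between s t (segment s t p)"
  by (auto simp: segment_def gap_def between_def)

lemma zigzag_cong:
  assumes "\<And>i. i < n \<Longrightarrow> up i = up' i"
  shows "zigzag n up = zigzag n up'"
proof -
  have "{(i, Suc i) | i. i < n \<and> up i} = {(i, Suc i) | i. i < n \<and> up' i}"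
       "{(Suc i, i) | i. i < n \<and> \<not> up i} = {(Suc i, i) | i. i < n \<and> \<not> up' i}"
    using assms by blast+
  then show ?thesis
    unfolding zigzag_def by simp
qed

lemma segment_le_zigzag:
  assumes f: "levelling n up f N" and "s \<le> n" "t \<le> n"
  shows "hom_le (zigzag (gap s t) (\<lambda>p. f (segment s t (Suc p)) = Suc (f (segment s t p)))) (zigzag n up)"
  unfolding hom_le_zigzag_iff
proof (intro exI[of _ "segment s t"] conjI allI impI)
  fix p
  assume p: "p < gap s t"
  have le: "segment s t p \<le> n" "segment s t (Suc p) \<le> n"
    using segment_le[OF assms(2,3)] p by simp_all
  have adj: "adjacent (segment s t p) (segment s t (Suc p))"
    using segment_adjacent[OF p] .
  {
    assume "f (segment s t (Suc p)) = Suc (f (segment s t p))"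
    then show "(segment s t p, segment s t (Suc p)) \<in> arcs (zigzag n up)"
      using levelling_arc_iff[OF f adj le] by simp
  next
    assume "f (segment s t (Suc p)) \<noteq> Suc (f (segment s t p))"
    then have "f (segment s t p) = Suc (f (segment s t (Suc p)))"
      using levelling_adjacent[OF f adj le] by simp
    then show "(segment s t (Suc p), segment s t p) \<in> arcs (zigzag n up)"
      using levelling_arc_iff[OF f adj[THEN adjacent_sym[THEN iffD1]] le(2,1)] by simp
  }
qed (simp add: segment_le[OF assms(2,3)])

lemma Llevel_walk:
  fixes g :: "nat \<Rightarrow> nat"
  assumes g0: "g 0 = 0" and gL: "g L = 3"
    and step: "\<And>p. p < L \<Longrightarrow> g (Suc p) = Suc (g p) \<or> g p = Suc (g (Suc p))"
    and inner: "\<And>p. 0 < p \<Longrightarrow> p < L \<Longrightarrow> g p \<noteq> 0 \<and> g p \<noteq> 3"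
  obtains k where "L = 2*k+3" "\<And>p. p \<le> L \<Longrightarrow> g p = Llevel k p"
proof -
  have inner_level: "g p = (if odd p then 1 else 2)" if "0 < p" "p < L" for p
    using that
  proof (induction p)
    case (Suc p)
    then show ?case
      using step[of p] inner[of "Suc p"] Suc.IH g0 by (cases "p = 0") auto
  qed simp
  have "L \<noteq> 0"
    using g0 gL by (cases L) auto
  moreover have "L \<noteq> 1"
  proof
    assume "L = 1"
    then show False using g0 gL step[of 0] by simp
  qed
  ultimately have "g (L - 1) = 2"
    using inner_level[of "L - 1"] step[of "L - 1"] gL by (auto split: if_splits)
  then have "even (L - 1)"
    using inner_level[of "L - 1"] \<open>L \<noteq> 0\<close> \<open>L \<noteq> 1\<close> by (auto split: if_splits)
  then obtain q where "L - 1 = 2*q" by blast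
  with \<open>L \<noteq> 0\<close> \<open>L \<noteq> 1\<close> have L: "L = 2*(q-1)+3" by simp
  have "g p = Llevel (q-1) p" if "p \<le> L" for p
    using that g0 gL inner_level[of p] L by (auto simp: Llevel_def)
  with L show ?thesis by (rule that)
qed

lemma Lzigzag_le_segment:
  assumes f: "levelling n up f 3" and "s \<le> n" "t \<le> n" "f s = 0" "f t = 3"
    and clean: "\<And>u. between s t u \<Longrightarrow> f u \<noteq> 0 \<and> f u \<noteq> 3"
  obtains k where "gap s t = 2*k+3" "hom_le (Lzigzag k) (zigzag n up)"
proof -
  let ?g = "\<lambda>p. f (segment s t p)"
  obtain k where L: "gap s t = 2*k+3" and g: "\<And>p. p \<le> gap s t \<Longrightarrow> ?g p = Llevel k p"
  proof (rule Llevel_walk[of ?g "gap s t"])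
    show "?g 0 = 0" "?g (gap s t) = 3" using assms by simp_all
    show "?g (Suc p) = Suc (?g p) \<or> ?g p = Suc (?g (Suc p))" if "p < gap s t" for p
      using levelling_adjacent[OF f segment_adjacent segment_le segment_le] assms(2,3) that by simp
    show "?g p \<noteq> 0 \<and> ?g p \<noteq> 3" if "0 < p" "p < gap s t" for p
      using clean segment_between that by blast
  qed blast
  have "zigzag (gap s t) (\<lambda>p. ?g (Suc p) = Suc (?g p)) = Lzigzag k"
    unfolding Lzigzag_def L
  proof (rule zigzag_cong)
    fix i assume "i < 2*k+3"
    then show "(?g (Suc i) = Suc (?g i)) = Lup k i"
      using g L levelling_Suc[OF levelling_Llevel, of i k] by (auto split: if_splits)
  qed
  then show ?thesis
    using that L segment_le_zigzag[OF f assms(2,3)] by simp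
qed

lemma dipath_2_le_segment:
  assumes f: "levelling n up f 2" and "s \<le> n" "t \<le> n" "f s = 0" "f t = 2"
    and clean: "\<And>u. between s t u \<Longrightarrow> f u \<noteq> 0 \<and> f u \<noteq> 2"
  shows "hom_le (dipath 2) (zigzag n up)"
proof -
  let ?g = "\<lambda>p. f (segment s t p)"
  have step: "?g (Suc p) = Suc (?g p) \<or> ?g p = Suc (?g (Suc p))" if "p < gap s t" for p
    using levelling_adjacent[OF f segment_adjacent segment_le segment_le] assms(2,3) that by simp
  have inner: "?g p \<noteq> 0 \<and> ?g p \<noteq> 2" if "0 < p" "p < gap s t" for p
    using clean segment_between that by blast
  have "gap s t \<noteq> 0"
    using assms(4,5) segment_gap[of s t] by (cases "gap s t") auto
  moreover have "gap s t \<noteq> 1"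
  proof
    assume "gap s t = 1"
    then show False using assms(4,5) segment_gap[of s t] step[of 0] by simp
  qed
  ultimately have g1: "?g 1 = 1"
    using step[of 0] inner[of 1] assms(4) by auto
  then have "?g 2 = 0 \<or> ?g 2 = 2"
    using step[of 1] \<open>gap s t \<noteq> 0\<close> \<open>gap s t \<noteq> 1\<close> by (auto simp: numeral_2_eq_2)
  then have L: "gap s t = 2"
    using inner[of 2] \<open>gap s t \<noteq> 0\<close> \<open>gap s t \<noteq> 1\<close> by fastforce
  have "zigzag (gap s t) (\<lambda>p. ?g (Suc p) = Suc (?g p)) = dipath 2"
    unfolding dipath_eq_zigzag L
    by (rule zigzag_cong) (use g1 assms(4,5) L segment_gap[of s t] in \<open>auto simp: less_Suc_eq numeral_2_eq_2\<close>)
  then show ?thesis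
    using segment_le_zigzag[OF f assms(2,3)] by simp
qed

subsection \<open>Oriented paths of height three\<close>

text \<open>The map \<open>place\<close> to \<open>L\<^sub>K\<close>: a vertex at level 0 or 3 goes to \<open>a\<close> or \<open>d\<close>; a vertex in between
  goes to the position given by its distance to the nearest level-0 vertex it sees without
  crossing level 3, folded back at position \<open>2K+2\<close> (or symmetrically from \<open>d\<close> if it sees no
  level-0 vertex). Folding is harmless because a stretch from level 0 to level 3 without
  intermediate visits has length \<open>2k+3 \<ge> 2K+3\<close>.\<close>

locale height3_zigzag =
  fixes n :: nat and up :: "nat \<Rightarrow> bool" and f :: "nat \<Rightarrow> nat" and K :: nat
  assumes levelling: "levelling n up f 3"
    and top_attained: "\<exists>u\<le>n. f u = 3"
    and K_least: "\<And>k. hom_le (Lzigzag k) (zigzag n up) \<Longrightarrow> K \<le> k"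
begin

definition visible :: "nat \<Rightarrow> nat \<Rightarrow> nat set" where
  "visible c t = {s. s \<le> n \<and> f s = c \<and> (\<forall>u. between t s u \<longrightarrow> f u \<noteq> 3 - c)}"

definition nearest :: "nat \<Rightarrow> nat \<Rightarrow> nat" where
  "nearest c t = Min (gap t ` visible c t)"

definition clamp :: "nat \<Rightarrow> nat" where
  "clamp x = (if x \<le> 2*K+2 then x else if even x then 2*K+2 else 2*K+1)"

definition place :: "nat \<Rightarrow> nat" where
  "place t = (if f t = 0 then 0 else if f t = 3 then 2*K+3
     else if visible 0 t \<noteq> {} then clamp (nearest 0 t) else 2*K+3 - clamp (nearest 3 t))"

lemma f_le_3: "t \<le> n \<Longrightarrow> f t \<le> 3"
  using levelling_le[OF levelling] .

lemma finite_visible: "finite (visible c t)"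
  by (rule finite_subset[of _ "{..n}"]) (auto simp: visible_def)

lemma nearest_le: "s \<in> visible c t \<Longrightarrow> nearest c t \<le> gap t s"
  unfolding nearest_def using finite_visible by simp

lemma nearest_attained:
  assumes "visible c t \<noteq> {}"
  obtains s where "s \<in> visible c t" "nearest c t = gap t s"
proof -
  have "nearest c t \<in> gap t ` visible c t"
    unfolding nearest_def using finite_visible assms by (intro Min_in) auto
  then show ?thesis using that by blast
qed

lemma even_nearest:
  assumes "t \<le> n" "visible c t \<noteq> {}"
  shows "even (nearest c t) \<longleftrightarrow> even (f t + c)"
proof -
  obtain s where s: "s \<in> visible c t" "nearest c t = gap t s"
    using nearest_attained assms(2) by blast
  then have "s \<le> n" "f s = c"
    unfolding visible_def by auto
  then have "even (f t + t) \<longleftrightarrow> even (c + s)"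
    using levelling_parity[OF levelling assms(1)] by simp
  then show ?thesis
    using s(2) even_gap_iff[of t s] by auto
qed

lemma nearest_pos:
  assumes "f t \<noteq> c" "visible c t \<noteq> {}"
  shows "1 \<le> nearest c t"
proof -
  obtain s where s: "s \<in> visible c t" "nearest c t = gap t s"
    using nearest_attained assms(2) by blast
  then have "s \<noteq> t" using assms(1) unfolding visible_def by auto
  with s(2) show ?thesis unfolding gap_def by auto
qed

lemma adjacent_visible:
  assumes "adjacent x y" "x \<le> n" "f x = c"
  shows "x \<in> visible c y"
  using assms adjacent_not_between[of y x] adjacent_sym unfolding visible_def by blast

lemma nearest_eq_1:
  assumes "adjacent x y" "x \<le> n" "f x = c" "f y \<noteq> c"
  shows "nearest c y = 1"
proof -
  have "x \<in> visible c y"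
    using adjacent_visible assms by blast
  then show ?thesis
    using nearest_le[of x c y] nearest_pos[of y c] adjacent_gap[of y x] assms adjacent_sym by fastforce
qed

lemma clamp_bounds: "1 \<le> x \<Longrightarrow> 1 \<le> clamp x \<and> clamp x \<le> 2*K+2 \<and> (even (clamp x) \<longleftrightarrow> even x)"
  unfolding clamp_def by auto

lemma clamp_adjacent: "adjacent x y \<Longrightarrow> adjacent (clamp x) (clamp y)"
  unfolding clamp_def adjacent_def by (auto split: if_splits; presburger)

text \<open>The witness is the level-3 vertex nearest to \<open>t\<close>.\<close>

lemma visible_3_nonempty:
  assumes t: "t \<le> n" and no_bottom: "visible 0 t = {}"
  shows "visible 3 t \<noteq> {}"
proof -
  obtain u0 where "u0 \<le> n" "f u0 = 3" using top_attained by blast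
  then obtain u where u: "u \<le> n" "f u = 3" and u_least: "\<And>v. v \<le> n \<Longrightarrow> f v = 3 \<Longrightarrow> gap t u \<le> gap t v"
    using ex_has_least_nat[of "\<lambda>u. u \<le> n \<and> f u = 3" u0 "gap t"] by blast
  have "f w \<noteq> 0" if w: "between t u w" for w
  proof
    assume fw: "f w = 0"
    have "f v \<noteq> 3" if v: "between t w v" for v
      using u_least[of v] between_trans[OF w v] between_le[of t u v n] between_gap_less[OF w]
        between_gap_less[of t w v] v t u(1) by fastforce
    then have "w \<in> visible 0 t"
      using fw between_le[OF w t u(1)] unfolding visible_def by simp
    with no_bottom show False by blast
  qed
  then have "u \<in> visible 3 t"
    using u unfolding visible_def by simp
  then show ?thesis by blast
qed

lemma place_level:
  assumes t: "t \<le> n"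
  shows "place t \<le> 2*K+3 \<and> Llevel K (place t) = f t"
proof (cases "f t = 0 \<or> f t = 3")
  case True
  then show ?thesis unfolding place_def by (auto simp: Llevel_def)
next
  case False
  then have f12: "f t = 1 \<or> f t = 2" using f_le_3[OF t] by auto
  show ?thesis
  proof (cases "visible 0 t = {}")
    case False
    then have "1 \<le> clamp (nearest 0 t)" "clamp (nearest 0 t) \<le> 2*K+2"
      "even (clamp (nearest 0 t)) \<longleftrightarrow> even (f t)"
      using clamp_bounds nearest_pos \<open>\<not> (f t = 0 \<or> f t = 3)\<close> even_nearest[OF t] by auto
    with f12 show ?thesis
      unfolding place_def using \<open>\<not> (f t = 0 \<or> f t = 3)\<close> False by (auto simp: Llevel_def)
  next
    case True
    with visible_3_nonempty[OF t] have "visible 3 t \<noteq> {}" by blast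
    then have c: "1 \<le> clamp (nearest 3 t)" "clamp (nearest 3 t) \<le> 2*K+2"
      "even (clamp (nearest 3 t)) \<longleftrightarrow> odd (f t)"
      using clamp_bounds nearest_pos \<open>\<not> (f t = 0 \<or> f t = 3)\<close> even_nearest[OF t] by auto
    have "even (2*K+3 - clamp (nearest 3 t)) \<longleftrightarrow> odd (clamp (nearest 3 t))"
      using c(2) by (simp add: even_diff_nat)
    with c f12 show ?thesis
      unfolding place_def using \<open>\<not> (f t = 0 \<or> f t = 3)\<close> True by (auto simp: Llevel_def)
  qed
qed

lemma visible_adjacent_eq:
  assumes c: "c = 0 \<or> c = 3" and "adjacent x y"
    and x: "f x \<noteq> 0" "f x \<noteq> 3" and y: "f y \<noteq> 0" "f y \<noteq> 3"
  shows "visible c x = visible c y"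
proof -
  have "visible c x \<subseteq> visible c y"
    if "adjacent x y" "f x \<noteq> 0" "f x \<noteq> 3" "f y \<noteq> 0" "f y \<noteq> 3" for x y
  proof
    fix s assume s: "s \<in> visible c x"
    then have "s \<noteq> x" "s \<noteq> y"
      using that c unfolding visible_def by auto
    have "f u \<noteq> 3 - c" if "between y s u" for u
    proof -
      have "between x s u \<or> u = x"
        using \<open>between y s u\<close> \<open>s \<noteq> x\<close> \<open>s \<noteq> y\<close> \<open>adjacent x y\<close>
        unfolding adjacent_def between_def by auto
      then show ?thesis
        using s \<open>f x \<noteq> 0\<close> \<open>f x \<noteq> 3\<close> c unfolding visible_def by auto
    qed
    then show "s \<in> visible c y"
      using s unfolding visible_def by simp
  qed
  with assms show ?thesis
    using adjacent_sym by blast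
qed

lemma nearest_adjacent:
  assumes c: "c = 0 \<or> c = 3" and xy: "adjacent x y" "x \<le> n" "y \<le> n"
    and x: "f x \<noteq> 0" "f x \<noteq> 3" and y: "f y \<noteq> 0" "f y \<noteq> 3" and vis: "visible c x \<noteq> {}"
  shows "adjacent (nearest c x) (nearest c y)"
proof -
  have eq: "visible c x = visible c y"
    using visible_adjacent_eq[OF c xy(1) x y] .
  have close: "nearest c y \<le> Suc (nearest c x)"
    if adj: "adjacent x y" and same: "visible c x = visible c y" and ne: "visible c x \<noteq> {}" for x y
  proof -
    obtain s where s: "s \<in> visible c x" "nearest c x = gap x s"
      using nearest_attained ne by blast
    have "nearest c y \<le> gap y s"
      using nearest_le s(1) same by simp
    also have "\<dots> \<le> Suc (gap x s)"
      using adjacent_gap_le[OF adj] .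
    finally show ?thesis using s(2) by simp
  qed
  have "even (f x) \<noteq> even (f y)"
    using levelling_adjacent[OF levelling xy] by auto
  then have "even (nearest c x) \<noteq> even (nearest c y)"
    using even_nearest[OF xy(2) vis] even_nearest[OF xy(3)] vis eq by auto
  then show ?thesis
    using adjacent_if_parity close[OF xy(1) eq vis] close[of y x] xy(1) adjacent_sym eq vis by metis
qed

lemma place_adjacent_inner:
  assumes xy: "adjacent x y" "x \<le> n" "y \<le> n"
    and x: "f x \<noteq> 0" "f x \<noteq> 3" and y: "f y \<noteq> 0" "f y \<noteq> 3"
  shows "adjacent (place x) (place y)"
proof (cases "visible 0 x = {}")
  case False
  then have "visible 0 y \<noteq> {}"
    using visible_adjacent_eq[OF _ xy(1) x y, of 0] by simp
  with False show ?thesis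
    using clamp_adjacent[OF nearest_adjacent[OF _ xy x y False]] x y unfolding place_def by simp
next
  case True
  then have no_bottom: "visible 0 y = {}"
    using visible_adjacent_eq[OF _ xy(1) x y, of 0] by simp
  have vis: "visible 3 x \<noteq> {}" "visible 3 y \<noteq> {}"
    using visible_3_nonempty True no_bottom xy(2,3) by blast+
  have "adjacent (clamp (nearest 3 x)) (clamp (nearest 3 y))"
    using clamp_adjacent[OF nearest_adjacent[OF _ xy x y vis(1)]] by simp
  moreover have "clamp (nearest 3 x) \<le> 2*K+3" "clamp (nearest 3 y) \<le> 2*K+3"
    using clamp_bounds[OF nearest_pos] x(2) y(2) vis by fastforce+
  ultimately show ?thesis
    using adjacent_diff True no_bottom x y unfolding place_def by simp
qed

lemma place_next_to_bottom:
  assumes xy: "adjacent x y" "x \<le> n" "y \<le> n" and x: "f x = 0"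
  shows "place y = 1"
proof -
  have "f y = 1"
    using levelling_adjacent[OF levelling xy] x by auto
  moreover have "visible 0 y \<noteq> {}"
    using adjacent_visible[OF xy(1,2) x] by blast
  ultimately show ?thesis
    using nearest_eq_1[OF xy(1,2) x] unfolding place_def clamp_def by simp
qed

text \<open>Here the minimality of \<open>K\<close> enters: the nearest level-0 vertex seen from \<open>y\<close> and the
  level-3 neighbour \<open>x\<close> of \<open>y\<close> bound a clean stretch, hence a copy of some \<open>L\<^sub>k\<close> with \<open>K \<le> k\<close>.\<close>

lemma place_next_to_top:
  assumes xy: "adjacent x y" "x \<le> n" "y \<le> n" and x: "f x = 3"
  shows "place y = 2*K+2"
proof -
  have y: "f y = 2"
    using levelling_adjacent[OF levelling xy] f_le_3[OF xy(3)] x by auto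
  show ?thesis
  proof (cases "visible 0 y = {}")
    case True
    then show ?thesis
      using nearest_eq_1[OF xy(1,2) x] y unfolding place_def clamp_def by simp
  next
    case False
    then obtain s where s: "s \<in> visible 0 y" "nearest 0 y = gap y s"
      using nearest_attained by blast
    then have s_le: "s \<le> n" and s0: "f s = 0" and s_sees: "\<And>u. between y s u \<Longrightarrow> f u \<noteq> 3"
      unfolding visible_def by auto
    have "s \<noteq> x" "s \<noteq> y" "\<not> between y s x"
      using s0 x y s_sees by auto
    then have xsy: "between x s y"
      using xy(1) unfolding adjacent_def between_def by auto
    have "f u \<noteq> 0 \<and> f u \<noteq> 3" if u: "between s x u" for u
    proof -
      have "u = y \<or> between y s u"
        using u xsy xy(1) unfolding adjacent_def between_def by auto
      moreover have "f u \<noteq> 0" if u: "between y s u"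
      proof
        assume "f u = 0"
        moreover have "\<And>v. between y u v \<Longrightarrow> f v \<noteq> 3"
          using s_sees between_trans[OF u] by blast
        ultimately have "u \<in> visible 0 y"
          using between_le[OF u xy(3) s_le] unfolding visible_def by simp
        then show False
          using nearest_le s(2) between_gap_less[OF u] by fastforce
      qed
      ultimately show ?thesis
        using y s_sees by auto
    qed
    then obtain k where k: "gap s x = 2*k+3" "hom_le (Lzigzag k) (zigzag n up)"
      using Lzigzag_le_segment[OF levelling s_le xy(2) s0 x] by blast
    have "gap x s = Suc (gap y s)"
      using xsy xy(1) unfolding adjacent_def between_def gap_def by auto
    then have "nearest 0 y = 2*k+2"
      using s(2) k(1) gap_sym[of s x] by simp
    with K_least[OF k(2)] show ?thesis
      using False y unfolding place_def clamp_def by auto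
  qed
qed

lemma place_adjacent:
  assumes "i < n"
  shows "adjacent (place i) (place (Suc i))"
proof -
  have adj: "adjacent i (Suc i)" "adjacent (Suc i) i" and le: "i \<le> n" "Suc i \<le> n"
    using assms unfolding adjacent_def by auto
  consider "f i = 0" | "f (Suc i) = 0" | "f i = 3" | "f (Suc i) = 3"
    | "f i \<noteq> 0" "f i \<noteq> 3" "f (Suc i) \<noteq> 0" "f (Suc i) \<noteq> 3"
    by blast
  then show ?thesis
  proof cases
    case 1
    then show ?thesis using place_next_to_bottom[OF adj(1) le] unfolding place_def adjacent_def by simp
  next
    case 2
    then show ?thesis using place_next_to_bottom[OF adj(2) le(2,1)] unfolding place_def adjacent_def by simp
  next
    case 3
    then show ?thesis using place_next_to_top[OF adj(1) le] unfolding place_def adjacent_def by simp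
  next
    case 4
    then show ?thesis using place_next_to_top[OF adj(2) le(2,1)] unfolding place_def adjacent_def by simp
  next
    case 5
    then show ?thesis using place_adjacent_inner[OF adj(1) le] by blast
  qed
qed

lemma zigzag_le_Lzigzag: "hom_le (zigzag n up) (Lzigzag K)"
  unfolding hom_le_zigzag_iff
proof (intro exI[of _ place] conjI allI impI)
  fix i assume "i \<le> n"
  then show "place i \<in> verts (Lzigzag K)"
    using place_level by simp
next
  fix i assume i: "i < n"
  have le: "place i \<le> 2*K+3" "place (Suc i) \<le> 2*K+3"
    using place_level i by simp_all
  have lev: "Llevel K (place i) = f i" "Llevel K (place (Suc i)) = f (Suc i)"
    using place_level i by simp_all
  note step = levelling_Suc[OF levelling i] and adj = place_adjacent[OF i]
  {
    assume "up i"
    then show "(place i, place (Suc i)) \<in> arcs (Lzigzag K)"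
      using Lzigzag_arc_iff[OF adj le] step lev by simp
  next
    assume "\<not> up i"
    then show "(place (Suc i), place i) \<in> arcs (Lzigzag K)"
      using Lzigzag_arc_iff[OF adj[THEN adjacent_sym[THEN iffD1]] le(2,1)] step lev by simp
  }
qed

end

subsection \<open>Classification by height\<close>

lemma height_eqI:
  assumes "hom_le G (dipath h)" and "\<And>j. j < h \<Longrightarrow> \<not> hom_le G (dipath j)"
  shows "height G = h"
  unfolding height_def using assms by (intro Least_equality) (auto simp: not_less[symmetric])

lemma dipath_2_le_zigzag:
  assumes f: "levelling n up f 2" and "\<not> hom_le (zigzag n up) (dipath 1)"
  shows "hom_le (dipath 2) (zigzag n up)"
proof -
  have "\<not> hom_le (zigzag n up) (dipath (2 - 1))"
    using assms(2) by simp
  then obtain s0 t0 where "s0 \<le> n" "t0 \<le> n" "f s0 = 0" "f t0 = 2"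
    using levelling_attains_bounds[OF f] by blast
  then obtain s t where "s \<le> n" "t \<le> n" "f s = 0" "f t = 2"
    and "\<And>u. between s t u \<Longrightarrow> f u \<noteq> 0 \<and> f u \<noteq> 2"
    by (rule exists_closest_pair) blast
  then show ?thesis
    by (rule dipath_2_le_segment[OF f])
qed

lemma zigzag_height_le_2:
  assumes "height (zigzag n up) \<le> 2"
  shows "hom_equiv (zigzag n up) (dipath (height (zigzag n up)))"
proof -
  define h where "h = height (zigzag n up)"
  have le: "hom_le (zigzag n up) (dipath h)"
    unfolding h_def by (rule hom_le_zigzag_height)
  have not_le: "\<not> hom_le (zigzag n up) (dipath j)" if "j < h" for j
    using not_hom_le_below_height that unfolding h_def .
  have "hom_le (dipath h) (zigzag n up)"
  proof -
    consider "h = 0" | "h = 1" | "h = 2"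
      using assms unfolding h_def by linarith
    then show ?thesis
    proof cases
      case 1
      show ?thesis
        unfolding 1 by (rule hom_leI[of _ "\<lambda>_. 0"]) (auto simp: dipath_def arcs_def)
    next
      case 2
      have "n \<noteq> 0"
      proof
        assume "n = 0"
        then have "hom_le (zigzag n up) (dipath 0)"
          using zigzag_0 hom_le_refl by simp
        with not_le[of 0] 2 show False by simp
      qed
      with 2 show ?thesis using dipath_1_le_zigzag by simp
    next
      case 3
      then obtain f where "levelling n up f 2"
        using le hom_le_dipath_iff_levelling by blast
      with 3 show ?thesis
        using dipath_2_le_zigzag not_le[of 1] by simp
    qed
  qed
  with le show ?thesis
    unfolding hom_equiv_def h_def by blast
qed

lemma zigzag_height_3:
  assumes "height (zigzag n up) = 3"
  obtains K where "hom_equiv (zigzag n up) (Lzigzag K)"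
proof -
  obtain f where f: "levelling n up f 3"
    using hom_le_zigzag_height[of n up] assms hom_le_dipath_iff_levelling by auto
  have "\<not> hom_le (zigzag n up) (dipath (3 - 1))"
    using not_hom_le_below_height[of 2 "zigzag n up"] assms by simp
  then obtain s0 t0 where "s0 \<le> n" "t0 \<le> n" "f s0 = 0" "f t0 = 3"
    using levelling_attains_bounds[OF f] by blast
  then obtain s t where st: "s \<le> n" "t \<le> n" "f s = 0" "f t = 3"
    and clean: "\<And>u. between s t u \<Longrightarrow> f u \<noteq> 0 \<and> f u \<noteq> 3"
    by (rule exists_closest_pair) blast
  obtain k where "hom_le (Lzigzag k) (zigzag n up)"
    using Lzigzag_le_segment[OF f st clean] by blast
  define K where "K = (LEAST k. hom_le (Lzigzag k) (zigzag n up))"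
  have K: "hom_le (Lzigzag K) (zigzag n up)"
    unfolding K_def by (rule LeastI) fact
  interpret height3_zigzag n up f K
    by unfold_locales (use f st K_def Least_le in auto)
  show ?thesis
    using that K zigzag_le_Lzigzag unfolding hom_equiv_def by blast
qed

lemma oriented_path_height_le_2:
  assumes "oriented_path G" "height G \<le> 2"
  shows "hom_equiv G (dipath (height G))"
proof -
  obtain n up where G: "hom_equiv G (zigzag n up)"
    using oriented_path_equiv_zigzag[OF assms(1)] .
  then have "height G = height (zigzag n up)"
    by (rule height_equiv_cong)
  with G assms(2) show ?thesis
    using zigzag_height_le_2 hom_equiv_trans by metis
qed

lemma oriented_path_height_3:
  assumes "oriented_path G" "height G = 3"
  obtains k where "hom_equiv G (Lpath k)"
proof -
  obtain n up where G: "hom_equiv G (zigzag n up)"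
    using oriented_path_equiv_zigzag[OF assms(1)] .
  then have "height (zigzag n up) = 3"
    using height_equiv_cong assms(2) by metis
  then obtain k where "hom_equiv (zigzag n up) (Lzigzag k)"
    by (rule zigzag_height_3)
  then have "hom_equiv G (Lpath k)"
    using G hom_equiv_trans hom_equiv_sym[OF Lpath_equiv_Lzigzag] by metis
  then show ?thesis by (rule that)
qed

lemma oriented_path_height_le_3:
  assumes "oriented_path G" "height G \<le> 3"
  shows "hom_equiv G (dipath 0) \<or> hom_equiv G (dipath 1) \<or> hom_equiv G (dipath 2)
    \<or> (\<exists>k. hom_equiv G (Lpath k))"
proof -
  consider "height G = 0" | "height G = 1" | "height G = 2" | "height G = 3"
    using assms(2) by linarith
  then show ?thesis
  proof cases
    case 4
    then obtain k where "hom_equiv G (Lpath k)"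
      using oriented_path_height_3[OF assms(1)] by blast
    then show ?thesis by blast
  qed (use oriented_path_height_le_2[OF assms(1)] in auto)
qed

lemma no_oriented_path_strictly_between:
  assumes "oriented_path G" "h \<le> 1"
  shows "\<not> (hom_lt (dipath h) G \<and> hom_lt G (dipath (Suc h)))"
proof
  assume lt: "hom_lt (dipath h) G \<and> hom_lt G (dipath (Suc h))"
  have "\<not> hom_le G (dipath j)" if "j < Suc h" for j
    using lt hom_le_trans[of G "dipath j" "dipath h"] dipath_le_dipath_iff[of j h] that
    unfolding hom_lt_def by auto
  with lt have "height G = Suc h"
    unfolding hom_lt_def by (intro height_eqI) auto
  then have "hom_le (dipath (Suc h)) G"
    using oriented_path_height_le_2[OF assms(1)] assms(2) unfolding hom_equiv_def by simp
  with lt show False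
    unfolding hom_lt_def by blast
qed

lemma dipath_lt_dipath_iff: "hom_lt (dipath a) (dipath b) \<longleftrightarrow> a < b"
  unfolding hom_lt_def dipath_le_dipath_iff by auto

lemma Lpath_le_Lpath_iff: "hom_le (Lpath k) (Lpath m) \<longleftrightarrow> m \<le> k"
  using hom_le_equiv_cong[OF Lpath_equiv_Lzigzag Lpath_equiv_Lzigzag] Lzigzag_le_iff by simp

lemma Lpath_lt_Lpath_iff: "hom_lt (Lpath k) (Lpath m) \<longleftrightarrow> m < k"
  unfolding hom_lt_def Lpath_le_Lpath_iff by auto

lemma height_Lpath: "height (Lpath k) = 3"
  using height_equiv_cong[OF Lpath_equiv_Lzigzag] height_Lzigzag by simp

lemma dipath_2_lt_Lpath: "hom_lt (dipath 2) (Lpath k)"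
  using hom_le_equiv_cong[OF hom_equiv_refl Lpath_equiv_Lzigzag, of "dipath 2" k]
    hom_le_equiv_cong[OF Lpath_equiv_Lzigzag hom_equiv_refl, of k "dipath 2"]
    dipath_2_le_Lzigzag Lzigzag_le_dipath_iff
  unfolding hom_lt_def by simp

lemma Lpath_0_equiv_dipath_3: "hom_equiv (Lpath 0) (dipath 3)"
  using Lpath_equiv_Lzigzag[of 0] Lzigzag_0 by simp

theorem mainTheorem6:
  shows
   "(\<forall>k m. hom_le (Lpath k) (Lpath m) \<longleftrightarrow> k \<ge> m)
  \<and> (\<forall>k. oriented_path (Lpath k) \<and> height (Lpath k) = 3)
  \<and> (\<forall>G :: 'a digraph. oriented_path G \<and> height G = 3 \<longrightarrow> (\<exists>k. hom_equiv G (Lpath k)))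
  \<and> (\<forall>G :: 'a digraph. oriented_path G \<and> height G \<le> 3 \<longrightarrow>
        hom_equiv G (dipath 0) \<or> hom_equiv G (dipath 1) \<or> hom_equiv G (dipath 2)
        \<or> (\<exists>k. hom_equiv G (Lpath k)))
  \<and> hom_lt (dipath 0) (dipath 1) \<and> hom_lt (dipath 1) (dipath 2)
  \<and> (\<forall>k. hom_lt (dipath 2) (Lpath k))
  \<and> (\<forall>k. hom_lt (Lpath (Suc k)) (Lpath k))
  \<and> hom_equiv (Lpath 0) (dipath 3)
  \<and> (\<forall>G :: 'a digraph. oriented_path G \<longrightarrow>
        \<not> (hom_lt (dipath 0) G \<and> hom_lt G (dipath 1))
      \<and> \<not> (hom_lt (dipath 1) G \<and> hom_lt G (dipath 2)))"
proof (intro conjI allI impI)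
  fix G :: "'a digraph"
  assume "oriented_path G \<and> height G = 3"
  then show "\<exists>k. hom_equiv G (Lpath k)"
    using oriented_path_height_3 by metis
next
  fix G :: "'a digraph"
  assume "oriented_path G \<and> height G \<le> 3"
  then show "hom_equiv G (dipath 0) \<or> hom_equiv G (dipath 1) \<or> hom_equiv G (dipath 2)
      \<or> (\<exists>k. hom_equiv G (Lpath k))"
    using oriented_path_height_le_3 by blast
next
  fix G :: "'a digraph"
  assume "oriented_path G"
  then show "\<not> (hom_lt (dipath 0) G \<and> hom_lt G (dipath 1))"
    and "\<not> (hom_lt (dipath 1) G \<and> hom_lt G (dipath 2))"
    using no_oriented_path_strictly_between[of G 0] no_oriented_path_strictly_between[of G 1]
    by (simp_all add: numeral_2_eq_2)
qed (simp_all add: Lpath_le_Lpath_iff oriented_path_Lpath height_Lpath dipath_lt_dipath_iff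
    Lpath_lt_Lpath_iff dipath_2_lt_Lpath Lpath_0_equiv_dipath_3)

end
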